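(* Fix $L>0$ and $t\ge0$, let Assumptions A1 and A2 hold, let $\sigma_h$ satisfy A3(a) and $\nu_0$ satisfy A3(b), and suppose the weights $W=W(t)$ satisfy the full-support condition $$\mathrm{supp}\big(W_{xh}(\theta),W_{hh}(\cdot,\theta),W_{hh}(\theta,\cdot)\big)=\mathbb R^d\times L_R^\infty(P_{hh})\times L_R^\infty(P_{hh}).$$ Then the linear span of $\{\mathbf x\mapsto\sigma_h(H_{hh}(\theta;\mathbf x,0)+W_{xh}(\theta)\cdot\mathbf x_0):\theta\in\mathrm{supp}(P_{hh})\}$ is dense in $L^2(\nu_{L,0})$.
   Context: Assumption A1: $\mathbf x=(\mathbf x_k)_{k\in\mathbb Z}$, $\mathbf x_k\in\mathbb R^d$, with $\mathbf x_{k+1}=T(\mathbf x_k)$ for a continuous $T:\mathbb R^d\to\mathbb R^d$ which (possibly restricted to a forward-invariant set) is uniquely ergodic with invariant measure $\nu_0$ having finite fourth moments; $\nu$ is the induced invariant law on sequences and $\nu_{L,0}$ its marginal on the coordinates $(\mathbf x_{-L},\dots,\mathbf x_0)$. Assumption A2: the target depends only on $\mathbf x_{-L},\dots,\mathbf x_0$. Mean-field hidden states: $(\Omega_h,P_{hh})$ a probability space, weights $W_{xh}(\theta)\in\mathbb R^d$, $W_{hh}(\theta,\theta')\in\mathbb R$; $H_{hh}(\theta;\mathbf x,L)\equiv0$, $H_{hh}(\theta;\mathbf x,k)=\int W_{hh}(\theta,\theta')\sigma_h(H_{hh}(\theta';\mathbf x,k+1)+W_{xh}(\theta')\cdot\mathbf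 x_{-(k+1)})P_{hh}(d\theta')$ for $k=L-1,\dots,0$. $L^\infty_R(P_{hh})=\{f\in L^2(P_{hh}):\sup|f|\le R\}$ for a fixed $R>0$; $W_{hh}(\cdot,\theta)$ denotes $\theta'\mapsto W_{hh}(\theta',\theta)$; the support is that of the law of $\theta\mapsto(W_{xh}(\theta),W_{hh}(\cdot,\theta),W_{hh}(\theta,\cdot))$ under $P_{hh}$. A3(a): for some $K>R$, $\sigma_h$ is bounded, differentiable, $\sigma_h(0)=0$, $\sigma_h'(0)\ne0$, $\sigma_h'$ $K$-bounded and $K$-Lipschitz. A3(b): $\mathrm{span}\{\sigma_h(w\cdot\mathbf x_0):w\in\mathbb R^d\}$ is dense in $L^2(\nu_0)$. *)

theory Defs
  imports "HOL-Probability.Probability"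
begin

text \<open>Windows of a sequence: a window is a function w on {0..L} with w k = x_{-k}.\<close>

text \<open>The measure nu_{L,0}: law of (x_{-L},...,x_0) under the stationary law nu, where
  x_{-L} has law nu0 and x_{-k} = T^(L-k) x_{-L}.\<close>
definition nu_L0 :: "'a::euclidean_space measure \<Rightarrow> ('a \<Rightarrow> 'a) \<Rightarrow> nat \<Rightarrow> (nat \<Rightarrow> 'a) measure" where
  "nu_L0 nu0 T L = distr nu0 (PiM {0..L} (\<lambda>_. borel)) (\<lambda>y. \<lambda>k\<in>{0..L}. (T ^^ (L - k)) y)"

definition uniquely_ergodic :: "('a::euclidean_space \<Rightarrow> 'a) \<Rightarrow> 'a measure \<Rightarrow> bool" where
  "uniquely_ergodic T nu0 \<longleftrightarrow>
     (\<exists>S \<in> sets borel. T ` S \<subseteq> S \<and> emeasure nu0 S = 1 \<and>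
        distr nu0 borel T = nu0 \<and>
        (\<forall>\<mu>. prob_space \<mu> \<and> sets \<mu> = sets borel \<and> emeasure \<mu> S = 1 \<and> distr \<mu> borel T = \<mu>
              \<longrightarrow> \<mu> = nu0))"

definition L2_fun :: "'b measure \<Rightarrow> ('b \<Rightarrow> real) set" where
  "L2_fun M = {f. f \<in> borel_measurable M \<and> integrable M (\<lambda>x. (f x)\<^sup>2)}"

definition L2_dist :: "'b measure \<Rightarrow> ('b \<Rightarrow> real) \<Rightarrow> ('b \<Rightarrow> real) \<Rightarrow> real" where
  "L2_dist M f g = sqrt (\<integral>x. (f x - g x)\<^sup>2 \<partial>M)"

definition span_dense_L2 :: "'b measure \<Rightarrow> ('b \<Rightarrow> real) set \<Rightarrow> bool" where
  "span_dense_L2 M F \<longleftrightarrow> F \<subseteq> L2_fun M \<and>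
     (\<forall>f \<in> L2_fun M. \<forall>\<epsilon>>0. \<exists>n::nat. \<exists>c::nat \<Rightarrow> real. \<exists>g::nat \<Rightarrow> 'b \<Rightarrow> real.
        (\<forall>i<n. g i \<in> F) \<and>
        L2_dist M f (\<lambda>x. \<Sum>i<n. c i * g i x) < \<epsilon>)"

text \<open>Mean-field hidden states, computed backwards: Hrec n is H_hh(.;x,L-n).\<close>
primrec Hrec :: "'b measure \<Rightarrow> ('b \<Rightarrow> 'a::euclidean_space) \<Rightarrow> ('b \<Rightarrow> 'b \<Rightarrow> real) \<Rightarrow> (real \<Rightarrow> real)
                 \<Rightarrow> nat \<Rightarrow> (nat \<Rightarrow> 'a) \<Rightarrow> nat \<Rightarrow> 'b \<Rightarrow> real" where
  "Hrec P Wxh Whh \<sigma> L x 0 \<theta> = 0"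
| "Hrec P Wxh Whh \<sigma> L x (Suc n) \<theta> =
     (\<integral>\<theta>'. Whh \<theta> \<theta>' * \<sigma> (Hrec P Wxh Whh \<sigma> L x n \<theta>' + Wxh \<theta>' \<bullet> x (L - n)) \<partial>P)"

definition H_hh :: "'b measure \<Rightarrow> ('b \<Rightarrow> 'a::euclidean_space) \<Rightarrow> ('b \<Rightarrow> 'b \<Rightarrow> real) \<Rightarrow> (real \<Rightarrow> real)
                 \<Rightarrow> nat \<Rightarrow> (nat \<Rightarrow> 'a) \<Rightarrow> nat \<Rightarrow> 'b \<Rightarrow> real" where
  "H_hh P Wxh Whh \<sigma> L x k \<theta> = Hrec P Wxh Whh \<sigma> L x (L - k) \<theta>"

definition A3a :: "real \<Rightarrow> (real \<Rightarrow> real) \<Rightarrow> bool" where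
  "A3a R \<sigma> \<longleftrightarrow> (\<exists>K>R. bounded (range \<sigma>) \<and> (\<forall>z. \<sigma> differentiable (at z)) \<and>
      \<sigma> 0 = 0 \<and> deriv \<sigma> 0 \<noteq> 0 \<and> (\<forall>z. \<bar>deriv \<sigma> z\<bar> \<le> K) \<and>
      (\<forall>y z. \<bar>deriv \<sigma> y - deriv \<sigma> z\<bar> \<le> K * \<bar>y - z\<bar>))"

definition A3b :: "(real \<Rightarrow> real) \<Rightarrow> 'a::euclidean_space measure \<Rightarrow> bool" where
  "A3b \<sigma> nu0 \<longleftrightarrow> span_dense_L2 nu0 {(\<lambda>x. \<sigma> (w \<bullet> x)) | w. True}"

text \<open>Full-support condition: the support of the law of
  theta |-> (Wxh theta, Whh(.,theta), Whh(theta,.)) on R^d x L^2(P) x L^2(P)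
  equals R^d x L^infty_R(P) x L^infty_R(P).  A point z belongs to the support iff
  every ball around z has positive probability.\<close>
definition full_support :: "real \<Rightarrow> 'b measure \<Rightarrow> ('b \<Rightarrow> 'a::euclidean_space) \<Rightarrow> ('b \<Rightarrow> 'b \<Rightarrow> real) \<Rightarrow> bool" where
  "full_support R P Wxh Whh \<longleftrightarrow>
     (\<forall>w f g. f \<in> L2_fun P \<and> g \<in> L2_fun P \<longrightarrow>
        ((\<forall>\<epsilon>>0. emeasure P {\<theta> \<in> space P. dist (Wxh \<theta>) w < \<epsilon> \<and>
                   L2_dist P (\<lambda>\<theta>'. Whh \<theta>' \<theta>) f < \<epsilon> \<and> L2_dist P (Whh \<theta>) g < \<epsilon>} > 0)
         \<longleftrightarrow> ((AE \<theta> in P. \<bar>f \<theta>\<bar> \<le> R) \<and> (AE \<theta> in P. \<bar>g \<theta>\<bar> \<le> R))))"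

end

(*
  Everything is pulled back along the window map y |-> (x_{-L}, ..., x_0) = (T^L y, ..., y),
  which carries the law nu0 of x_{-L} to nu_{L,0}.  Give a unit at depth n an arbitrary input
  weight w and arbitrary incoming recurrent weights g with |g| <= R; the span of the resulting
  activations is dense in L^2(nu0) for every n.  At depth 0 these are the ridge functions
  sigma(w . y) of A3(b).  For the induction step take a depth-n activation with weights (w0, g0),
  let S be the set of units whose weights are delta-close to (w0, g0), which has positive mass by
  the full-support condition, and give a depth-(n+1) unit the recurrent weights delta R 1_S.  Its
  recurrent input is delta R P(S) times the average over S of the depth-n activations, which is
  O(delta)-close to the target; as sigma(0) = 0 and sigma'(0) <> 0, dividing the output by
  delta R P(S) sigma'(0) recovers the target up to O(delta) in L^2.  The error envelope is square
  integrable because T preserves nu0, which has second moments.  Finally, each such activation at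
  depth L is O(delta)-close to the activation of any single unit of S.
*)

theory Submission
  imports Defs
begin

section \<open>Bounds for differentiable real functions\<close>

lemma lipschitz_if_deriv_bounded:
  fixes f :: "real \<Rightarrow> real"
  assumes deriv: "\<And>x. (f has_real_derivative f' x) (at x)" and bounded: "\<And>x. \<bar>f' x\<bar> \<le> K"
  shows "\<bar>f a - f b\<bar> \<le> K * \<bar>a - b\<bar>"
proof -
  have "norm (f a - f b) \<le> K * norm (a - b)"
  proof (rule field_differentiable_bound[of UNIV f f'])
    show "\<And>x. (f has_real_derivative f' x) (at x within UNIV)"
      using deriv by simp
  qed (use bounded in auto)
  then show ?thesis
    by simp
qed

lemma linearization_error_bound:
  fixes f :: "real \<Rightarrow> real"
  assumes deriv: "\<And>x. (f has_real_derivative f' x) (at x)"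
    and lipschitz: "\<And>x. \<bar>f' x - f' 0\<bar> \<le> K * \<bar>x\<bar>"
  shows "\<bar>f z - f 0 - f' 0 * z\<bar> \<le> K * z\<^sup>2"
proof -
  have "K \<ge> 0"
    using lipschitz[of 1] by linarith
  have "\<bar>(f z - f' 0 * z) - (f 0 - f' 0 * 0)\<bar> \<le> (K * \<bar>z\<bar>) * \<bar>z - 0\<bar>"
  proof (rule field_differentiable_bound[of "cball 0 \<bar>z\<bar>" "\<lambda>x. f x - f' 0 * x" "\<lambda>x. f' x - f' 0",
        simplified real_norm_def])
    fix x :: real assume "x \<in> cball 0 \<bar>z\<bar>"
    then have "\<bar>x\<bar> \<le> \<bar>z\<bar>" by simp
    then show "\<bar>f' x - f' 0\<bar> \<le> K * \<bar>z\<bar>"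
      using lipschitz[of x] \<open>K \<ge> 0\<close> by (meson mult_left_mono order_trans)
  next
    fix x :: real
    have "((\<lambda>x. f x - f' 0 * x) has_real_derivative f' x - f' 0) (at x)"
      using deriv[of x] by (auto intro!: derivative_eq_intros)
    then show "((\<lambda>x. f x - f' 0 * x) has_real_derivative f' x - f' 0) (at x within cball 0 \<bar>z\<bar>)"
      by (rule has_field_derivative_at_within)
  qed auto
  then show ?thesis
    by (simp add: power2_eq_square algebra_simps)
qed

section \<open>Square-integrable functions and finite linear combinations\<close>

lemma square_lin_le: "((c::real) * a + b)\<^sup>2 \<le> 2 * c\<^sup>2 * a\<^sup>2 + 2 * b\<^sup>2"
proof -
  have "(c * a + b)\<^sup>2 + (c * a - b)\<^sup>2 = 2 * c\<^sup>2 * a\<^sup>2 + 2 * b\<^sup>2"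
    by (simp add: power2_eq_square algebra_simps)
  then show ?thesis
    using zero_le_power2[of "c * a - b"] by linarith
qed

lemma L2_fun_measurable: "f \<in> L2_fun M \<Longrightarrow> f \<in> borel_measurable M"
  by (simp add: L2_fun_def)

lemma L2_fun_zero: "(\<lambda>x. 0) \<in> L2_fun M"
  by (simp add: L2_fun_def)

lemma L2_fun_lin:
  assumes "f \<in> L2_fun M" "g \<in> L2_fun M"
  shows "(\<lambda>x. c * f x + g x) \<in> L2_fun M"
proof -
  have [measurable]: "f \<in> borel_measurable M" "g \<in> borel_measurable M"
    and "integrable M (\<lambda>x. (f x)\<^sup>2)" "integrable M (\<lambda>x. (g x)\<^sup>2)"
    using assms by (auto simp: L2_fun_def)
  then have "integrable M (\<lambda>x. 2 * c\<^sup>2 * (f x)\<^sup>2 + 2 * (g x)\<^sup>2)"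
    by auto
  then have "integrable M (\<lambda>x. (c * f x + g x)\<^sup>2)"
  proof (rule Bochner_Integration.integrable_bound)
    show "AE x in M. norm ((c * f x + g x)\<^sup>2) \<le> norm (2 * c\<^sup>2 * (f x)\<^sup>2 + 2 * (g x)\<^sup>2)"
      by (simp add: square_lin_le)
  qed measurable
  then show ?thesis
    by (simp add: L2_fun_def)
qed

lemma (in finite_measure) L2_fun_bounded:
  assumes "f \<in> borel_measurable M" "\<And>x. x \<in> space M \<Longrightarrow> \<bar>f x\<bar> \<le> B"
  shows "f \<in> L2_fun M"
proof -
  have "(f x)\<^sup>2 \<le> B\<^sup>2" if "x \<in> space M" for x
    using assms(2)[OF that] by (metis abs_ge_zero power2_abs power_mono)
  then have "integrable M (\<lambda>x. (f x)\<^sup>2)"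
    using assms(1) by (intro integrable_const_bound[where B = "B\<^sup>2"]) auto
  then show ?thesis
    using assms by (simp add: L2_fun_def)
qed

lemma (in finite_measure) L2_fun_integrable:
  assumes "f \<in> L2_fun M"
  shows "integrable M f"
  using assms by (intro square_integrable_imp_integrable[of f]) (simp_all add: L2_fun_def)

lemma L2_fun_diff:
  assumes "f \<in> L2_fun M" "g \<in> L2_fun M"
  shows "(\<lambda>x. f x - g x) \<in> L2_fun M"
  using L2_fun_lin[OF assms(2,1), of "-1"] by simp

text \<open>A quasi-triangle inequality with constant 2 is all the approximation arguments need,
  so Minkowski's inequality is avoided.\<close>

lemma sqrt_integral_square_lin_le:
  fixes u v :: "'b \<Rightarrow> real"
  assumes [measurable]: "u \<in> borel_measurable M" "v \<in> borel_measurable M"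
    and "integrable M (\<lambda>x. (u x)\<^sup>2)" "integrable M (\<lambda>x. (v x)\<^sup>2)"
  shows "sqrt (\<integral>x. (c * u x + v x)\<^sup>2 \<partial>M)
           \<le> 2 * (\<bar>c\<bar> * sqrt (\<integral>x. (u x)\<^sup>2 \<partial>M) + sqrt (\<integral>x. (v x)\<^sup>2 \<partial>M))"
proof (rule real_le_lsqrt)
  define U V where "U = (\<integral>x. (u x)\<^sup>2 \<partial>M)" and "V = (\<integral>x. (v x)\<^sup>2 \<partial>M)"
  have "U \<ge> 0" "V \<ge> 0"
    by (auto simp: U_def V_def)
  have "(\<integral>x. (c * u x + v x)\<^sup>2 \<partial>M) \<le> (\<integral>x. 2 * c\<^sup>2 * (u x)\<^sup>2 + 2 * (v x)\<^sup>2 \<partial>M)"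
    using assms by (intro integral_mono') (auto simp: square_lin_le)
  also have "\<dots> = 2 * (\<bar>c\<bar> * sqrt U)\<^sup>2 + 2 * (sqrt V)\<^sup>2"
    using assms \<open>U \<ge> 0\<close> \<open>V \<ge> 0\<close> by (simp add: U_def V_def power_mult_distrib)
  also have "\<dots> \<le> (2 * (\<bar>c\<bar> * sqrt U + sqrt V))\<^sup>2"
  proof -
    have "2 * x\<^sup>2 + 2 * y\<^sup>2 \<le> (2 * (x + y))\<^sup>2" if "0 \<le> x * y" for x y :: real
    proof -
      have "(2 * (x + y))\<^sup>2 = 2 * x\<^sup>2 + 2 * y\<^sup>2 + (2 * x\<^sup>2 + 2 * y\<^sup>2 + 8 * (x * y))"
        by (simp add: power2_eq_square algebra_simps)
      then show ?thesis
        using that by simp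
    qed
    from this[of "\<bar>c\<bar> * sqrt U" "sqrt V"] show ?thesis
      using \<open>U \<ge> 0\<close> \<open>V \<ge> 0\<close> by simp
  qed
  finally show "(\<integral>x. (c * u x + v x)\<^sup>2 \<partial>M) \<le> (2 * (\<bar>c\<bar> * sqrt U + sqrt V))\<^sup>2" .
qed (simp add: integral_nonneg_AE)

lemma L2_dist_lin_le:
  assumes "a \<in> L2_fun M" "a' \<in> L2_fun M" "b \<in> L2_fun M" "b' \<in> L2_fun M"
  shows "L2_dist M (\<lambda>x. c * a x + b x) (\<lambda>x. c * a' x + b' x)
           \<le> 2 * \<bar>c\<bar> * L2_dist M a a' + 2 * L2_dist M b b'"
proof -
  have "(\<lambda>x. ((c * a x + b x) - (c * a' x + b' x))\<^sup>2) = (\<lambda>x. (c * (a x - a' x) + (b x - b' x))\<^sup>2)"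
    by (simp add: algebra_simps)
  then have "L2_dist M (\<lambda>x. c * a x + b x) (\<lambda>x. c * a' x + b' x)
               = sqrt (\<integral>x. (c * (a x - a' x) + (b x - b' x))\<^sup>2 \<partial>M)"
    by (simp add: L2_dist_def)
  also have "\<dots> \<le> 2 * (\<bar>c\<bar> * L2_dist M a a' + L2_dist M b b')"
    using L2_fun_diff[OF assms(1,2)] L2_fun_diff[OF assms(3,4)] unfolding L2_dist_def L2_fun_def
    by (intro sqrt_integral_square_lin_le) simp_all
  finally show ?thesis
    by (simp add: algebra_simps)
qed

lemma L2_dist_triangle_le:
  assumes "f \<in> L2_fun M" "g \<in> L2_fun M" "h \<in> L2_fun M"
  shows "L2_dist M f h \<le> 2 * L2_dist M f g + 2 * L2_dist M g h"
proof -
  have "L2_dist M f h = sqrt (\<integral>x. (1 * (f x - g x) + (g x - h x))\<^sup>2 \<partial>M)"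
    by (simp add: L2_dist_def)
  also have "\<dots> \<le> 2 * (\<bar>1\<bar> * L2_dist M f g + L2_dist M g h)"
    using L2_fun_diff[OF assms(1,2)] L2_fun_diff[OF assms(2,3)] unfolding L2_dist_def L2_fun_def
    by (intro sqrt_integral_square_lin_le) simp_all
  finally show ?thesis
    by simp
qed

lemma L2_dist_le_pointwise:
  assumes "f \<in> L2_fun M" "g \<in> L2_fun M" "E \<in> L2_fun M"
    and "\<And>x. x \<in> space M \<Longrightarrow> \<bar>f x - g x\<bar> \<le> E x"
  shows "L2_dist M f g \<le> sqrt (\<integral>x. (E x)\<^sup>2 \<partial>M)"
  unfolding L2_dist_def real_sqrt_le_iff
proof (rule integral_mono')
  fix x assume "x \<in> space M"
  then show "(f x - g x)\<^sup>2 \<le> (E x)\<^sup>2"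
    using assms(4) by (metis abs_ge_zero power2_abs power_mono)
qed (use assms in \<open>auto simp: L2_fun_def\<close>)

definition lin_span :: "('b \<Rightarrow> real) set \<Rightarrow> ('b \<Rightarrow> real) set" where
  "lin_span F = {(\<lambda>x. \<Sum>i<n. c i * g i x) | (n::nat) c g. \<forall>i<n. g i \<in> F}"

lemma lin_span_zero: "(\<lambda>x. 0) \<in> lin_span F"
  unfolding lin_span_def by (auto intro!: exI[of _ "0::nat"])

lemma lin_span_insert:
  assumes "g \<in> F" "h \<in> lin_span F"
  shows "(\<lambda>x. c * g x + h x) \<in> lin_span F"
proof -
  obtain n :: nat and cs gs where h: "h = (\<lambda>x. \<Sum>i<n. cs i * gs i x)" and gs: "\<forall>i<n. gs i \<in> F"
    using assms(2) by (auto simp: lin_span_def)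
  have "(\<Sum>i<n. (cs(n := c)) i * (gs(n := g)) i x) = (\<Sum>i<n. cs i * gs i x)" for x
    by (intro sum.cong) auto
  then have "(\<lambda>x. c * g x + h x) = (\<lambda>x. \<Sum>i<Suc n. (cs(n := c)) i * (gs(n := g)) i x)"
    unfolding h by (simp add: add.commute)
  moreover have "\<forall>i<Suc n. (gs(n := g)) i \<in> F"
    using gs assms(1) by (simp add: less_Suc_eq)
  ultimately show ?thesis
    unfolding lin_span_def by blast
qed

lemma lin_span_scale: "g \<in> F \<Longrightarrow> (\<lambda>x. c * g x) \<in> lin_span F"
  using lin_span_insert[OF _ lin_span_zero, of g F c] by simp

lemma lin_span_base: "g \<in> F \<Longrightarrow> g \<in> lin_span F"
  using lin_span_scale[of g F 1] by simp

lemma lin_span_induct [consumes 1, case_names zero insert]: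
  assumes "\<phi> \<in> lin_span F" and zero: "P (\<lambda>x. 0)"
    and insert: "\<And>c g h. g \<in> F \<Longrightarrow> h \<in> lin_span F \<Longrightarrow> P h \<Longrightarrow> P (\<lambda>x. c * g x + h x)"
  shows "P \<phi>"
proof -
  obtain n :: nat and c g where \<phi>: "\<phi> = (\<lambda>x. \<Sum>i<n. c i * g i x)" and g: "\<forall>i<n. g i \<in> F"
    using assms(1) by (auto simp: lin_span_def)
  have "P (\<lambda>x. \<Sum>i<m. c i * g i x)" if "m \<le> n" for m
    using that
  proof (induction m)
    case 0
    then show ?case
      using zero by simp
  next
    case (Suc m)
    have "(\<lambda>x. \<Sum>i<m. c i * g i x) \<in> lin_span F"
      using g Suc.prems unfolding lin_span_def by force
    then have "P (\<lambda>x. c m * g m x + (\<Sum>i<m. c i * g i x))"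
      using g Suc by (intro insert) auto
    then show ?case
      by (simp add: add.commute)
  qed
  then show ?thesis
    using \<phi> by simp
qed

lemma lin_span_lin:
  assumes "a \<in> lin_span F" "b \<in> lin_span F"
  shows "(\<lambda>x. c * a x + b x) \<in> lin_span F"
  using assms
proof (induction a arbitrary: b rule: lin_span_induct)
  case zero
  then show ?case
    by simp
next
  case (insert c' g h)
  have "(\<lambda>x. (c * c') * g x + (c * h x + b x)) \<in> lin_span F"
    using lin_span_insert[OF insert.hyps(1) insert.IH[OF insert.prems]] .
  then show ?case
    by (simp add: algebra_simps)
qed

lemma lin_span_subset_L2:
  assumes "F \<subseteq> L2_fun M"
  shows "lin_span F \<subseteq> L2_fun M"
proof
  fix \<phi> assume "\<phi> \<in> lin_span F"
  then show "\<phi> \<in> L2_fun M"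
    by (induction rule: lin_span_induct) (use assms in \<open>auto intro: L2_fun_zero L2_fun_lin\<close>)
qed

lemma lin_span_subset_measurable:
  assumes "F \<subseteq> borel_measurable M"
  shows "lin_span F \<subseteq> borel_measurable M"
proof
  fix \<phi> assume "\<phi> \<in> lin_span F"
  then show "\<phi> \<in> borel_measurable M"
    by (induction rule: lin_span_induct) (use assms in auto)
qed

lemma lin_span_image_comp:
  assumes "\<phi> \<in> lin_span ((\<lambda>f. f \<circ> \<Phi>) ` F)"
  shows "\<exists>\<psi>\<in>lin_span F. \<phi> = \<psi> \<circ> \<Phi>"
  using assms
proof (induction rule: lin_span_induct)
  case zero
  show ?case
    using lin_span_zero by force
next
  case (insert c g h)
  then obtain f \<psi> where "f \<in> F" "g = f \<circ> \<Phi>" "\<psi> \<in> lin_span F" "h = \<psi> \<circ> \<Phi>"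
    by blast
  then show ?case
    by (intro bexI[of _ "\<lambda>x. c * f x + \<psi> x"]) (auto intro: lin_span_insert)
qed

definition L2_approx :: "'b measure \<Rightarrow> ('b \<Rightarrow> real) set \<Rightarrow> ('b \<Rightarrow> real) \<Rightarrow> bool" where
  "L2_approx M G f \<longleftrightarrow> (\<forall>\<epsilon>>0. \<exists>\<phi>\<in>lin_span G. L2_dist M f \<phi> < \<epsilon>)"

lemma span_dense_L2_iff:
  "span_dense_L2 M F \<longleftrightarrow> F \<subseteq> L2_fun M \<and> (\<forall>f\<in>L2_fun M. L2_approx M F f)"
  unfolding span_dense_L2_def L2_approx_def lin_span_def by blast

lemma L2_approx_zero: "L2_approx M G (\<lambda>x. 0)"
  unfolding L2_approx_def by (intro allI impI bexI[OF _ lin_span_zero]) (simp add: L2_dist_def)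

lemma L2_approx_lin:
  assumes G: "G \<subseteq> L2_fun M" and a: "a \<in> L2_fun M" "L2_approx M G a"
    and b: "b \<in> L2_fun M" "L2_approx M G b"
  shows "L2_approx M G (\<lambda>x. c * a x + b x)"
  unfolding L2_approx_def
proof (intro allI impI)
  fix \<epsilon> :: real assume "\<epsilon> > 0"
  then obtain \<phi>a \<phi>b where \<phi>a: "\<phi>a \<in> lin_span G" "L2_dist M a \<phi>a < \<epsilon> / (4 * (\<bar>c\<bar> + 1))"
    and \<phi>b: "\<phi>b \<in> lin_span G" "L2_dist M b \<phi>b < \<epsilon> / 4"
    using a(2) b(2) unfolding L2_approx_def by (metis divide_pos_pos zero_less_numeral
        mult_pos_pos abs_ge_zero add_nonneg_pos zero_less_one)
  have "L2_dist M (\<lambda>x. c * a x + b x) (\<lambda>x. c * \<phi>a x + \<phi>b x)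
          \<le> 2 * \<bar>c\<bar> * L2_dist M a \<phi>a + 2 * L2_dist M b \<phi>b"
    using a b \<phi>a \<phi>b lin_span_subset_L2[OF G] by (intro L2_dist_lin_le) auto
  moreover have "\<bar>c\<bar> * L2_dist M a \<phi>a \<le> \<epsilon> / 4"
  proof -
    have "\<bar>c\<bar> * L2_dist M a \<phi>a \<le> \<bar>c\<bar> * (\<epsilon> / (4 * (\<bar>c\<bar> + 1)))"
      using \<phi>a by (intro mult_left_mono) auto
    also have "\<dots> \<le> \<epsilon> / 4"
      using \<open>\<epsilon> > 0\<close> by (simp add: field_simps)
    finally show ?thesis .
  qed
  ultimately have "L2_dist M (\<lambda>x. c * a x + b x) (\<lambda>x. c * \<phi>a x + \<phi>b x) < \<epsilon>"
    using \<phi>b by linarith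
  moreover have "(\<lambda>x. c * \<phi>a x + \<phi>b x) \<in> lin_span G"
    using \<phi>a \<phi>b by (intro lin_span_lin)
  ultimately show "\<exists>\<phi>\<in>lin_span G. L2_dist M (\<lambda>x. c * a x + b x) \<phi> < \<epsilon>"
    by blast
qed

lemma L2_approx_lin_span:
  assumes "\<phi> \<in> lin_span F" "F \<subseteq> L2_fun M" "G \<subseteq> L2_fun M" "\<forall>f\<in>F. L2_approx M G f"
  shows "L2_approx M G \<phi>"
  using assms(1)
proof (induction rule: lin_span_induct)
  case zero
  then show ?case
    by (rule L2_approx_zero)
next
  case (insert c g h)
  then show ?case
    using assms(2-4) lin_span_subset_L2[OF assms(2)] by (intro L2_approx_lin) auto
qed

lemma L2_approx_trans:
  assumes f: "f \<in> L2_fun M" "L2_approx M F f"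
    and F: "F \<subseteq> L2_fun M" "\<forall>\<phi>\<in>F. L2_approx M G \<phi>" and G: "G \<subseteq> L2_fun M"
  shows "L2_approx M G f"
  unfolding L2_approx_def
proof (intro allI impI)
  fix \<epsilon> :: real assume "\<epsilon> > 0"
  then obtain \<phi> where \<phi>: "\<phi> \<in> lin_span F" "L2_dist M f \<phi> < \<epsilon> / 4"
    using f(2) unfolding L2_approx_def by (meson divide_pos_pos zero_less_numeral)
  moreover have "L2_approx M G \<phi>"
    using \<phi>(1) F G by (intro L2_approx_lin_span)
  ultimately obtain \<psi> where \<psi>: "\<psi> \<in> lin_span G" "L2_dist M \<phi> \<psi> < \<epsilon> / 4"
    using \<open>\<epsilon> > 0\<close> unfolding L2_approx_def by (meson divide_pos_pos zero_less_numeral)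
  have "L2_dist M f \<psi> \<le> 2 * L2_dist M f \<phi> + 2 * L2_dist M \<phi> \<psi>"
    using f \<phi> \<psi> lin_span_subset_L2[OF F(1)] lin_span_subset_L2[OF G] by (intro L2_dist_triangle_le) auto
  then show "\<exists>\<psi>\<in>lin_span G. L2_dist M f \<psi> < \<epsilon>"
    using \<phi> \<psi> by (intro bexI[of _ \<psi>]) auto
qed

lemma span_dense_L2_trans:
  assumes "span_dense_L2 M F" "G \<subseteq> L2_fun M" "\<forall>\<phi>\<in>F. L2_approx M G \<phi>"
  shows "span_dense_L2 M G"
  using assms L2_approx_trans unfolding span_dense_L2_iff by blast

lemma L2_approx_if_pointwise:
  assumes G: "G \<subseteq> L2_fun M" and f: "f \<in> L2_fun M" and E: "E \<in> L2_fun M"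
    and close: "\<And>\<delta>. 0 < \<delta> \<Longrightarrow> \<delta> \<le> 1 \<Longrightarrow> \<exists>\<phi>\<in>lin_span G. \<forall>x\<in>space M. \<bar>f x - \<phi> x\<bar> \<le> \<delta> * E x"
  shows "L2_approx M G f"
  unfolding L2_approx_def
proof (intro allI impI)
  fix \<epsilon> :: real assume "\<epsilon> > 0"
  define C where "C = sqrt (\<integral>x. (E x)\<^sup>2 \<partial>M)"
  define \<delta> where "\<delta> = min 1 (\<epsilon> / (C + 1))"
  have "C \<ge> 0"
    by (simp add: C_def integral_nonneg_AE)
  have \<delta>: "0 < \<delta>" "\<delta> \<le> 1"
    using \<open>\<epsilon> > 0\<close> \<open>C \<ge> 0\<close> by (auto simp: \<delta>_def)
  have "\<delta> * C \<le> \<epsilon> / (C + 1) * C"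
    using \<open>C \<ge> 0\<close> by (intro mult_right_mono) (auto simp: \<delta>_def)
  also have "\<dots> < \<epsilon>"
    using \<open>\<epsilon> > 0\<close> \<open>C \<ge> 0\<close> by (simp add: field_simps)
  finally have "\<delta> * C < \<epsilon>" .
  obtain \<phi> where \<phi>: "\<phi> \<in> lin_span G" "\<And>x. x \<in> space M \<Longrightarrow> \<bar>f x - \<phi> x\<bar> \<le> \<delta> * E x"
    using close[OF \<delta>(1,2)] by blast
  have "L2_dist M f \<phi> \<le> sqrt (\<integral>x. (\<delta> * E x)\<^sup>2 \<partial>M)"
    using f \<phi> E lin_span_subset_L2[OF G] L2_fun_lin[OF E L2_fun_zero, of \<delta>]
    by (intro L2_dist_le_pointwise) auto
  also have "\<dots> = \<delta> * C"
    using \<delta>(1) by (simp add: C_def power_mult_distrib real_sqrt_mult)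
  finally show "\<exists>\<phi>\<in>lin_span G. L2_dist M f \<phi> < \<epsilon>"
    using \<phi>(1) \<open>\<delta> * C < \<epsilon>\<close> by (intro bexI[of _ \<phi>]) auto
qed

lemma L2_fun_distr_iff:
  assumes [measurable]: "\<Phi> \<in> measurable M N"
  shows "f \<in> L2_fun (distr M N \<Phi>) \<longleftrightarrow> f \<in> borel_measurable N \<and> f \<circ> \<Phi> \<in> L2_fun M"
proof (cases "f \<in> borel_measurable N")
  case True
  then have "integrable (distr M N \<Phi>) (\<lambda>x. (f x)\<^sup>2) \<longleftrightarrow> integrable M (\<lambda>x. (f (\<Phi> x))\<^sup>2)"
    by (intro integrable_distr_eq) auto
  with True show ?thesis
    by (simp add: L2_fun_def o_def)
qed (simp add: L2_fun_def)

lemma L2_dist_distr: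
  assumes [measurable]: "\<Phi> \<in> measurable M N" "f \<in> borel_measurable N" "g \<in> borel_measurable N"
  shows "L2_dist (distr M N \<Phi>) f g = L2_dist M (f \<circ> \<Phi>) (g \<circ> \<Phi>)"
  unfolding L2_dist_def by (subst integral_distr) (auto simp: o_def)

lemma span_dense_L2_distr:
  assumes \<Phi>: "\<Phi> \<in> measurable M N" and F: "F \<subseteq> borel_measurable N"
    and dense: "span_dense_L2 M ((\<lambda>f. f \<circ> \<Phi>) ` F)"
  shows "span_dense_L2 (distr M N \<Phi>) F"
proof -
  have "F \<subseteq> L2_fun (distr M N \<Phi>)"
  proof
    fix f assume "f \<in> F"
    then have "f \<circ> \<Phi> \<in> L2_fun M"
      using dense unfolding span_dense_L2_iff by blast
    then show "f \<in> L2_fun (distr M N \<Phi>)"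
      using F \<open>f \<in> F\<close> L2_fun_distr_iff[OF \<Phi>] by blast
  qed
  moreover have "L2_approx (distr M N \<Phi>) F f" if f: "f \<in> L2_fun (distr M N \<Phi>)" for f
    unfolding L2_approx_def
  proof (intro allI impI)
    fix \<epsilon> :: real assume "\<epsilon> > 0"
    have f_N: "f \<in> borel_measurable N" and f_M: "f \<circ> \<Phi> \<in> L2_fun M"
      using f L2_fun_distr_iff[OF \<Phi>] by blast+
    then have "L2_approx M ((\<lambda>f. f \<circ> \<Phi>) ` F) (f \<circ> \<Phi>)"
      using dense unfolding span_dense_L2_iff by blast
    then obtain \<phi> where \<phi>: "\<phi> \<in> lin_span ((\<lambda>f. f \<circ> \<Phi>) ` F)" "L2_dist M (f \<circ> \<Phi>) \<phi> < \<epsilon>"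
      using \<open>\<epsilon> > 0\<close> unfolding L2_approx_def by blast
    then obtain \<psi> where \<psi>: "\<psi> \<in> lin_span F" "\<phi> = \<psi> \<circ> \<Phi>"
      using lin_span_image_comp by blast
    then have "\<psi> \<in> borel_measurable N"
      using lin_span_subset_measurable[OF F] by blast
    then have "L2_dist (distr M N \<Phi>) f \<psi> < \<epsilon>"
      using \<phi>(2) \<psi>(2) L2_dist_distr[OF \<Phi> f_N] by simp
    then show "\<exists>\<psi>\<in>lin_span F. L2_dist (distr M N \<Phi>) f \<psi> < \<epsilon>"
      using \<psi>(1) by blast
  qed
  ultimately show ?thesis
    unfolding span_dense_L2_iff by blast
qed

section \<open>Integral estimates\<close>

lemma integral_abs_le_integral:
  fixes f g :: "'a \<Rightarrow> real"
  assumes "integrable M g" "\<And>x. x \<in> space M \<Longrightarrow> \<bar>f x\<bar> \<le> g x"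
  shows "\<bar>\<integral>x. f x \<partial>M\<bar> \<le> (\<integral>x. g x \<partial>M)"
proof -
  have "\<bar>\<integral>x. f x \<partial>M\<bar> \<le> (\<integral>x. \<bar>f x\<bar> \<partial>M)"
    using integral_norm_bound[of M f] by simp
  also have "\<dots> \<le> (\<integral>x. g x \<partial>M)"
    using assms by (intro integral_mono') (auto intro: order_trans[OF abs_ge_zero])
  finally show ?thesis .
qed

lemma (in prob_space) integral_abs_le_sqrt_integral_square:
  assumes "h \<in> L2_fun M"
  shows "(\<integral>x. \<bar>h x\<bar> \<partial>M) \<le> sqrt (\<integral>x. (h x)\<^sup>2 \<partial>M)"
proof (rule real_le_rsqrt)
  have square: "integrable M (\<lambda>x. (\<bar>h x\<bar>)\<^sup>2)"
    using assms by (simp add: L2_fun_def)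
  have "integrable M h"
    using assms by (rule L2_fun_integrable)
  then have "integrable M (\<lambda>x. \<bar>h x\<bar>)"
    by (rule integrable_abs)
  then have "variance (\<lambda>x. \<bar>h x\<bar>) = (\<integral>x. (\<bar>h x\<bar>)\<^sup>2 \<partial>M) - (\<integral>x. \<bar>h x\<bar> \<partial>M)\<^sup>2"
    using square by (rule variance_eq)
  then show "(\<integral>x. \<bar>h x\<bar> \<partial>M)\<^sup>2 \<le> (\<integral>x. (h x)\<^sup>2 \<partial>M)"
    using variance_positive[of "\<lambda>x. \<bar>h x\<bar>"] by simp
qed

lemma (in finite_measure) set_average_close:
  fixes h :: "'a \<Rightarrow> real"
  assumes S: "S \<in> sets M" "measure M S > 0" and h: "integrable M h"
    and close: "\<And>x. x \<in> S \<Longrightarrow> \<bar>h x - a\<bar> \<le> r"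
  shows "\<bar>(\<integral>x. indicator S x * h x \<partial>M) / measure M S - a\<bar> \<le> r"
proof -
  have integrable_on_S: "integrable M (\<lambda>x. indicator S x * f x)" if "integrable M f" for f :: "'a \<Rightarrow> real"
    using integrable_real_mult_indicator[OF S(1) that] by (simp add: mult.commute)
  have S_space: "S \<inter> space M = S"
    using sets.sets_into_space[OF S(1)] by blast
  have const: "(\<integral>x. indicator S x * c \<partial>M) = measure M S * c" for c :: real
    by (simp add: S_space)
  have "(\<integral>x. indicator S x * h x \<partial>M) - measure M S * a = (\<integral>x. indicator S x * (h x - a) \<partial>M)"
    using integrable_on_S[OF h] integrable_on_S[OF integrable_const[of a]]
    by (simp add: right_diff_distrib const S_space)
  also have "\<bar>\<dots>\<bar> \<le> (\<integral>x. indicator S x * r \<partial>M)"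
    using close integrable_on_S[OF integrable_const[of r]]
    by (intro integral_abs_le_integral) (auto simp: indicator_def)
  also have "\<dots> = measure M S * r"
    by (rule const)
  finally show ?thesis
    using S(2) by (simp add: divide_le_eq abs_le_iff field_simps)
qed

lemma (in finite_measure) integrable_power2_if_power4:
  fixes f :: "'a \<Rightarrow> real"
  assumes "f \<in> borel_measurable M" "integrable M (\<lambda>x. f x ^ 4)"
  shows "integrable M (\<lambda>x. (f x)\<^sup>2)"
proof (rule square_integrable_imp_integrable)
  show "integrable M (\<lambda>x. ((f x)\<^sup>2)\<^sup>2)"
    using assms(2) by (simp flip: power_mult)
qed (use assms(1) in measurable)

lemma integrable_funpow_invariant:
  fixes f :: "'a \<Rightarrow> real"
  assumes T [measurable]: "T \<in> measurable M M" and invariant: "distr M M T = M"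
    and f [measurable]: "f \<in> borel_measurable M" and "integrable M f"
  shows "integrable M (\<lambda>x. f ((T ^^ k) x))"
proof (induction k)
  case 0
  then show ?case
    using \<open>integrable M f\<close> by simp
next
  case (Suc k)
  have "(\<lambda>x. f ((T ^^ k) x)) \<in> borel_measurable M"
    by measurable
  then have "integrable M (\<lambda>x. f ((T ^^ k) x)) \<longleftrightarrow> integrable M (\<lambda>x. f ((T ^^ k) (T x)))"
    using integrable_distr_eq[OF T, of "\<lambda>x. f ((T ^^ k) x)"] invariant by simp
  then show ?case
    using Suc by (simp add: funpow_Suc_right del: funpow.simps)
qed

section \<open>The mean-field recurrent network\<close>

locale mean_field_rnn = N: prob_space nu0 + Q: prob_space P
  for nu0 :: "'a::euclidean_space measure" and P :: "'b measure" +
  fixes L :: nat and R K B :: real and T :: "'a \<Rightarrow> 'a" and Wxh :: "'b \<Rightarrow> 'a"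
    and Whh :: "'b \<Rightarrow> 'b \<Rightarrow> real" and \<sigma> :: "real \<Rightarrow> real"
  assumes R_pos: "R > 0"
    and \<sigma>_bounded: "\<And>z. \<bar>\<sigma> z\<bar> \<le> B"
    and \<sigma>_deriv: "\<And>z. (\<sigma> has_real_derivative deriv \<sigma> z) (at z)"
    and \<sigma>_zero: "\<sigma> 0 = 0" and deriv_\<sigma>_nonzero: "deriv \<sigma> 0 \<noteq> 0"
    and deriv_\<sigma>_bounded: "\<And>z. \<bar>deriv \<sigma> z\<bar> \<le> K"
    and deriv_\<sigma>_lipschitz: "\<And>y z. \<bar>deriv \<sigma> y - deriv \<sigma> z\<bar> \<le> K * \<bar>y - z\<bar>"
    and sets_nu0: "sets nu0 = sets borel"
    and T_measurable: "T \<in> borel_measurable borel"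
    and T_invariant: "distr nu0 borel T = nu0"
    and second_moment: "integrable nu0 (\<lambda>x. (norm x)\<^sup>2)"
    and Wxh_measurable [measurable]: "Wxh \<in> borel_measurable P"
    and Whh_measurable [measurable]: "(\<lambda>(\<theta>, \<theta>'). Whh \<theta> \<theta>') \<in> borel_measurable (P \<Otimes>\<^sub>M P)"
    and Whh_L2: "\<And>\<theta>. \<theta> \<in> space P \<Longrightarrow> Whh \<theta> \<in> L2_fun P"
    and weights_full_support: "full_support R P Wxh Whh"
    and ridge_dense: "A3b \<sigma> nu0"
begin

text \<open>\<^term>\<open>window y k\<close> is x_{-k} on the trajectory with x_{-L} = y, and
  \<^term>\<open>activation n \<theta>\<close> is the output sigma(H_hh(theta; x, L - n) + W_xh(theta) . x_{-(L-n)})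
  of unit theta on it.  \<^term>\<open>activation_with n w g\<close> is the same unit with input weight w and
  incoming recurrent weights g.\<close>

definition window :: "'a \<Rightarrow> nat \<Rightarrow> 'a" where
  "window y = (\<lambda>k\<in>{0..L}. (T ^^ (L - k)) y)"

definition activation :: "nat \<Rightarrow> 'b \<Rightarrow> 'a \<Rightarrow> real" where
  "activation n \<theta> y = \<sigma> (Hrec P Wxh Whh \<sigma> L (window y) n \<theta> + Wxh \<theta> \<bullet> window y (L - n))"

definition recurrent_input :: "nat \<Rightarrow> ('b \<Rightarrow> real) \<Rightarrow> 'a \<Rightarrow> real" where
  "recurrent_input n g y = (case n of 0 \<Rightarrow> 0 | Suc m \<Rightarrow> \<integral>\<theta>. g \<theta> * activation m \<theta> y \<partial>P)"

definition activation_with :: "nat \<Rightarrow> 'a \<Rightarrow> ('b \<Rightarrow> real) \<Rightarrow> 'a \<Rightarrow> real" where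
  "activation_with n w g y = \<sigma> (recurrent_input n g y + w \<bullet> window y (L - n))"

definition activations :: "nat \<Rightarrow> ('a \<Rightarrow> real) set" where
  "activations n = {activation n \<theta> | \<theta>. \<theta> \<in> space P}"

definition bounded_activations :: "nat \<Rightarrow> ('a \<Rightarrow> real) set" where
  "bounded_activations n =
     {activation_with n w g | w g. g \<in> L2_fun P \<and> (AE \<theta> in P. \<bar>g \<theta>\<bar> \<le> R)}"

lemma activation_eq_activation_with: "activation n \<theta> = activation_with n (Wxh \<theta>) (Whh \<theta>)"
  by (cases n) (simp_all add: fun_eq_iff activation_def activation_with_def recurrent_input_def)

lemma \<sigma>_measurable [measurable]: "\<sigma> \<in> borel_measurable borel"
  using \<sigma>_deriv by (intro borel_measurable_continuous_onI continuous_at_imp_continuous_on)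
    (auto intro: DERIV_isCont)

lemma funpow_T_measurable [measurable]: "T ^^ k \<in> borel_measurable borel"
  using measurable_compose_n[OF T_measurable] .

lemma window_measurable [measurable]: "window \<in> measurable nu0 (PiM {0..L} (\<lambda>_. borel))"
  unfolding window_def by (subst measurable_cong_sets[OF sets_nu0 refl]) measurable

lemma window_input_eq: "window y (L - n) = (T ^^ min n L) y"
  by (simp add: window_def min_def)

lemma window_last: "window y L = y"
  by (simp add: window_def)

lemma window_input_measurable [measurable]: "(\<lambda>y. window y (L - n)) \<in> borel_measurable nu0"
  unfolding window_input_eq by (subst measurable_cong_sets[OF sets_nu0 refl]) measurable

lemma window_input_inner_measurable [measurable]:
  "(\<lambda>y. w \<bullet> window y (L - n)) \<in> borel_measurable nu0"
  using borel_measurable_inner[OF measurable_const window_input_measurable] by simp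

lemma Hrec_measurable [measurable]:
  "(\<lambda>(x, \<theta>). Hrec P Wxh Whh \<sigma> L x n \<theta>) \<in> borel_measurable (PiM {0..L} (\<lambda>_. borel) \<Otimes>\<^sub>M P)"
proof (induction n)
  case (Suc n)
  note [measurable] = Suc
  show ?case
    by simp measurable
qed simp

lemma activation_measurable [measurable]:
  "(\<lambda>(y, \<theta>). activation n \<theta> y) \<in> borel_measurable (nu0 \<Otimes>\<^sub>M P)"
  unfolding activation_def by measurable

lemma recurrent_input_measurable [measurable]:
  "g \<in> borel_measurable P \<Longrightarrow> recurrent_input n g \<in> borel_measurable nu0"
  unfolding recurrent_input_def by (cases n) (auto intro!: Q.borel_measurable_lebesgue_integral)

lemma activation_with_measurable [measurable]:
  "g \<in> borel_measurable P \<Longrightarrow> activation_with n w g \<in> borel_measurable nu0"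
  unfolding activation_with_def
  by (intro measurable_compose[OF _ \<sigma>_measurable] borel_measurable_add recurrent_input_measurable
      window_input_inner_measurable)

lemma space_nu0: "space nu0 = UNIV"
  using sets_eq_imp_space_eq[OF sets_nu0] by simp

lemma activation_measurable_unit [measurable]: "(\<lambda>\<theta>. activation n \<theta> y) \<in> borel_measurable P"
  using measurable_compose[OF measurable_Pair1'[of y nu0 P] activation_measurable] by (simp add: space_nu0)

lemma K_nonneg: "K \<ge> 0"
  using deriv_\<sigma>_bounded[of 0] by linarith

lemma B_nonneg: "B \<ge> 0"
  using \<sigma>_bounded[of 0] by linarith

lemma activation_bounded: "\<bar>activation n \<theta> y\<bar> \<le> B"
  by (simp add: activation_def \<sigma>_bounded)

lemma activation_with_bounded: "\<bar>activation_with n w g y\<bar> \<le> B"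
  by (simp add: activation_with_def \<sigma>_bounded)

lemma activation_with_L2: "g \<in> borel_measurable P \<Longrightarrow> activation_with n w g \<in> L2_fun nu0"
  by (intro N.L2_fun_bounded[where B = B] activation_with_measurable activation_with_bounded)

lemma activations_L2: "activations n \<subseteq> L2_fun nu0"
proof
  fix f assume "f \<in> activations n"
  then obtain \<theta> where "\<theta> \<in> space P" "f = activation_with n (Wxh \<theta>) (Whh \<theta>)"
    unfolding activations_def activation_eq_activation_with by blast
  then show "f \<in> L2_fun nu0"
    using Whh_L2 L2_fun_measurable activation_with_L2 by blast
qed

lemma bounded_activations_L2: "bounded_activations n \<subseteq> L2_fun nu0"
proof
  fix f assume "f \<in> bounded_activations n"
  then obtain w g where "g \<in> L2_fun P" "f = activation_with n w g"
    unfolding bounded_activations_def by blast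
  then show "f \<in> L2_fun nu0"
    using L2_fun_measurable activation_with_L2 by blast
qed

lemma envelope_L2: "(\<lambda>y. a + b * norm (window y (L - n))) \<in> L2_fun nu0"
proof -
  have "integrable nu0 (\<lambda>y. (norm ((T ^^ min n L) y))\<^sup>2)"
  proof (rule integrable_funpow_invariant[OF _ _ _ second_moment])
    show "T \<in> measurable nu0 nu0"
      using T_measurable by (simp add: measurable_cong_sets[OF sets_nu0 sets_nu0])
    show "distr nu0 nu0 T = nu0"
      using T_invariant by (simp add: distr_cong[OF refl sets_nu0])
  qed (simp add: measurable_cong_sets[OF sets_nu0 refl])
  moreover have "(\<lambda>y. norm (window y (L - n))) \<in> borel_measurable nu0"
    by measurable
  ultimately have "(\<lambda>y. norm (window y (L - n))) \<in> L2_fun nu0"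
    unfolding L2_fun_def by (simp add: window_input_eq)
  from L2_fun_lin[OF this N.L2_fun_bounded[of "\<lambda>_. a" "\<bar>a\<bar>"], of b] show ?thesis
    by (simp add: add.commute)
qed

lemma \<sigma>_lipschitz: "\<bar>\<sigma> a - \<sigma> b\<bar> \<le> K * \<bar>a - b\<bar>"
  using lipschitz_if_deriv_bounded[OF \<sigma>_deriv deriv_\<sigma>_bounded] .

lemma \<sigma>_scaled_linearization:
  assumes "u > 0"
  shows "\<bar>\<sigma> (u * a) / (u * deriv \<sigma> 0) - a\<bar> \<le> K * u * a\<^sup>2 / \<bar>deriv \<sigma> 0\<bar>"
proof -
  let ?d = "deriv \<sigma> 0"
  have "\<bar>\<sigma> (u * a) - \<sigma> 0 - ?d * (u * a)\<bar> \<le> K * (u * a)\<^sup>2"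
    by (rule linearization_error_bound[OF \<sigma>_deriv]) (use deriv_\<sigma>_lipschitz[of _ 0] in simp)
  then have "\<bar>\<sigma> (u * a) - ?d * (u * a)\<bar> \<le> K * (u * a)\<^sup>2"
    by (simp add: \<sigma>_zero)
  moreover have "\<sigma> (u * a) / (u * ?d) - a = (\<sigma> (u * a) - ?d * (u * a)) / (u * ?d)"
    using assms deriv_\<sigma>_nonzero by (simp add: field_simps)
  ultimately show ?thesis
    using assms deriv_\<sigma>_nonzero
    by (simp add: abs_mult divide_le_eq power2_eq_square field_simps)
qed

lemma integrable_times_activation:
  assumes "h \<in> L2_fun P"
  shows "integrable P (\<lambda>\<theta>. h \<theta> * activation m \<theta> y)"
proof (rule Bochner_Integration.integrable_bound)
  have [measurable]: "h \<in> borel_measurable P"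
    using assms by (simp add: L2_fun_def)
  show "integrable P (\<lambda>\<theta>. B * h \<theta>)"
    using Q.L2_fun_integrable[OF assms] by simp
  show "(\<lambda>\<theta>. h \<theta> * activation m \<theta> y) \<in> borel_measurable P"
    by measurable
  show "AE \<theta> in P. norm (h \<theta> * activation m \<theta> y) \<le> norm (B * h \<theta>)"
  proof (rule AE_I2)
    fix \<theta>
    have "\<bar>h \<theta>\<bar> * \<bar>activation m \<theta> y\<bar> \<le> \<bar>h \<theta>\<bar> * B"
      using activation_bounded by (rule mult_left_mono) simp
    then show "norm (h \<theta> * activation m \<theta> y) \<le> norm (B * h \<theta>)"
      using B_nonneg by (simp add: abs_mult ac_simps)
  qed
qed

lemma recurrent_input_diff_le:
  assumes "g \<in> L2_fun P" "g0 \<in> L2_fun P"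
  shows "\<bar>recurrent_input n g y - recurrent_input n g0 y\<bar> \<le> B * L2_dist P g g0"
proof (cases n)
  case 0
  then show ?thesis
    using B_nonneg by (simp add: recurrent_input_def L2_dist_def)
next
  case (Suc m)
  have diff: "(\<lambda>\<theta>. g \<theta> - g0 \<theta>) \<in> L2_fun P"
    using assms by (rule L2_fun_diff)
  have "recurrent_input n g y - recurrent_input n g0 y = (\<integral>\<theta>. (g \<theta> - g0 \<theta>) * activation m \<theta> y \<partial>P)"
    using Suc assms by (simp add: recurrent_input_def left_diff_distrib integrable_times_activation)
  also have "\<bar>\<dots>\<bar> \<le> (\<integral>\<theta>. B * \<bar>g \<theta> - g0 \<theta>\<bar> \<partial>P)"
  proof (rule integral_abs_le_integral)
    show "integrable P (\<lambda>\<theta>. B * \<bar>g \<theta> - g0 \<theta>\<bar>)"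
      using Q.L2_fun_integrable[OF diff] by simp
    fix \<theta>
    have "\<bar>g \<theta> - g0 \<theta>\<bar> * \<bar>activation m \<theta> y\<bar> \<le> \<bar>g \<theta> - g0 \<theta>\<bar> * B"
      by (intro mult_left_mono activation_bounded) simp
    then show "\<bar>(g \<theta> - g0 \<theta>) * activation m \<theta> y\<bar> \<le> B * \<bar>g \<theta> - g0 \<theta>\<bar>"
      by (simp add: abs_mult mult.commute)
  qed
  also have "\<dots> \<le> B * L2_dist P g g0"
    using Q.integral_abs_le_sqrt_integral_square[OF diff] B_nonneg
    by (simp add: L2_dist_def mult_left_mono)
  finally show ?thesis .
qed

lemma activation_with_diff_le:
  assumes "g \<in> L2_fun P" "g0 \<in> L2_fun P"
  shows "\<bar>activation_with n w g y - activation_with n w0 g0 y\<bar>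
           \<le> K * (B * L2_dist P g g0 + dist w w0 * norm (window y (L - n)))"
proof -
  let ?x = "window y (L - n)"
  have "\<bar>(w - w0) \<bullet> ?x\<bar> \<le> dist w w0 * norm ?x"
    using Cauchy_Schwarz_ineq2[of "w - w0" ?x] by (simp add: dist_norm)
  then have "\<bar>(recurrent_input n g y + w \<bullet> ?x) - (recurrent_input n g0 y + w0 \<bullet> ?x)\<bar>
               \<le> B * L2_dist P g g0 + dist w w0 * norm ?x"
    using recurrent_input_diff_le[OF assms, of n y] by (simp add: inner_diff_left abs_le_iff)
  then show ?thesis
    unfolding activation_with_def using \<sigma>_lipschitz K_nonneg by (meson mult_left_mono order_trans)
qed

definition near_units :: "'a \<Rightarrow> ('b \<Rightarrow> real) \<Rightarrow> real \<Rightarrow> 'b set" where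
  "near_units w g \<delta> = {\<theta> \<in> space P. dist (Wxh \<theta>) w < \<delta> \<and> L2_dist P (Whh \<theta>) g < \<delta>}"

lemma near_units_measurable:
  assumes [measurable]: "g \<in> borel_measurable P"
  shows "near_units w g \<delta> \<in> sets P"
proof -
  have "(\<lambda>\<theta>. \<integral>\<theta>'. (Whh \<theta> \<theta>' - g \<theta>')\<^sup>2 \<partial>P) \<in> borel_measurable P"
    by (rule Q.borel_measurable_lebesgue_integral) measurable
  then show ?thesis
    unfolding near_units_def L2_dist_def by measurable
qed

lemma near_units_positive:
  assumes g: "g \<in> L2_fun P" "AE \<theta> in P. \<bar>g \<theta>\<bar> \<le> R" and "\<delta> > 0"
  shows "measure P (near_units w g \<delta>) > 0"
proof -
  let ?A = "{\<theta> \<in> space P. dist (Wxh \<theta>) w < \<delta> \<and>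
              L2_dist P (\<lambda>\<theta>'. Whh \<theta>' \<theta>) (\<lambda>_. 0) < \<delta> \<and> L2_dist P (Whh \<theta>) g < \<delta>}"
  have "AE \<theta> in P. \<bar>(\<lambda>_. 0::real) \<theta>\<bar> \<le> R"
    using R_pos by simp
  then have "emeasure P ?A > 0"
    using weights_full_support g L2_fun_zero \<open>\<delta> > 0\<close> unfolding full_support_def by blast
  also have "emeasure P ?A \<le> emeasure P (near_units w g \<delta>)"
    using near_units_measurable[OF L2_fun_measurable[OF g(1)]]
    by (intro emeasure_mono) (auto simp: near_units_def)
  finally show ?thesis
    by (simp add: Q.emeasure_eq_measure)
qed

lemma activation_close_near_units:
  assumes "\<theta> \<in> near_units w0 g0 \<delta>" "g0 \<in> L2_fun P"
  shows "\<bar>activation n \<theta> y - activation_with n w0 g0 y\<bar> \<le> \<delta> * (K * B + K * norm (window y (L - n)))"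
proof -
  have "\<theta> \<in> space P" "dist (Wxh \<theta>) w0 < \<delta>" "L2_dist P (Whh \<theta>) g0 < \<delta>"
    using assms(1) by (auto simp: near_units_def)
  then have "B * L2_dist P (Whh \<theta>) g0 + dist (Wxh \<theta>) w0 * norm (window y (L - n))
               \<le> B * \<delta> + \<delta> * norm (window y (L - n))"
    using B_nonneg by (intro add_mono mult_left_mono mult_right_mono) auto
  then have "K * (B * L2_dist P (Whh \<theta>) g0 + dist (Wxh \<theta>) w0 * norm (window y (L - n)))
               \<le> \<delta> * (K * B + K * norm (window y (L - n)))"
    using K_nonneg mult_left_mono by (fastforce simp: algebra_simps)
  moreover have "\<bar>activation n \<theta> y - activation_with n w0 g0 y\<bar>
                   \<le> K * (B * L2_dist P (Whh \<theta>) g0 + dist (Wxh \<theta>) w0 * norm (window y (L - n)))"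
    unfolding activation_eq_activation_with using Whh_L2[OF \<open>\<theta> \<in> space P\<close>] assms(2)
    by (rule activation_with_diff_le)
  ultimately show ?thesis
    by linarith
qed

lemma activation_with_approx_by_activations:
  assumes g0: "g0 \<in> L2_fun P" "AE \<theta> in P. \<bar>g0 \<theta>\<bar> \<le> R"
  shows "L2_approx nu0 (activations n) (activation_with n w0 g0)"
proof (rule L2_approx_if_pointwise[OF activations_L2 activation_with_L2[OF L2_fun_measurable[OF g0(1)]] envelope_L2])
  fix \<delta> :: real assume "0 < \<delta>" "\<delta> \<le> 1"
  then have "measure P (near_units w0 g0 \<delta>) > 0"
    by (intro near_units_positive g0)
  then have "near_units w0 g0 \<delta> \<noteq> {}"
    by auto
  then obtain \<theta> where \<theta>: "\<theta> \<in> near_units w0 g0 \<delta>"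
    by blast
  then have "activation n \<theta> \<in> activations n"
    by (auto simp: activations_def near_units_def)
  then have "activation n \<theta> \<in> lin_span (activations n)"
    by (rule lin_span_base)
  moreover have "\<bar>activation_with n w0 g0 y - activation n \<theta> y\<bar> \<le> \<delta> * (K * B + K * norm (window y (L - n)))" for y
    using activation_close_near_units[OF \<theta> g0(1)] by (simp add: abs_minus_commute)
  ultimately show "\<exists>\<phi>\<in>lin_span (activations n). \<forall>y\<in>space nu0.
      \<bar>activation_with n w0 g0 y - \<phi> y\<bar> \<le> \<delta> * (K * B + K * norm (window y (L - n)))"
    by blast
qed

definition mean_activation :: "nat \<Rightarrow> 'b set \<Rightarrow> 'a \<Rightarrow> real" where
  "mean_activation n S y = (\<integral>\<theta>. indicator S \<theta> * activation n \<theta> y \<partial>P) / measure P S"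

lemma mean_activation_close:
  assumes "S \<in> sets P" "measure P S > 0" and "\<And>\<theta>. \<theta> \<in> S \<Longrightarrow> \<bar>activation n \<theta> y - a\<bar> \<le> r"
  shows "\<bar>mean_activation n S y - a\<bar> \<le> r"
  unfolding mean_activation_def
proof (rule Q.set_average_close[OF assms(1,2) _ assms(3)])
  show "integrable P (\<lambda>\<theta>. activation n \<theta> y)"
    using activation_bounded by (intro Q.integrable_const_bound[where B = B]) auto
qed

lemma activation_with_indicator:
  assumes "S \<in> sets P" "measure P S > 0"
  shows "activation_with (Suc n) 0 (\<lambda>\<theta>. c * indicator S \<theta>) y
           = \<sigma> (c * measure P S * mean_activation n S y)"
  using assms(2) by (simp add: activation_with_def recurrent_input_def mean_activation_def ac_simps)

lemma linearized_mean_activation_close: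
  assumes S: "S \<in> sets P" "measure P S > 0" and "u > 0" "u \<le> \<delta> * R"
  shows "\<bar>\<sigma> (u * mean_activation n S y) / (u * deriv \<sigma> 0) - mean_activation n S y\<bar>
           \<le> \<delta> * (K * R * B\<^sup>2 / \<bar>deriv \<sigma> 0\<bar>)"
proof -
  let ?a = "mean_activation n S y"
  have "\<bar>?a - 0\<bar> \<le> B"
    using S activation_bounded by (intro mean_activation_close) auto
  then have a_bound: "?a\<^sup>2 \<le> B\<^sup>2"
    using power_mono[of "\<bar>?a\<bar>" B 2] by simp
  have "K * u \<le> K * (\<delta> * R)" "0 \<le> K * (\<delta> * R)"
    using K_nonneg assms(3,4) by (simp_all add: mult_left_mono)
  from mult_mono[OF this(1) a_bound this(2)] have "K * u * ?a\<^sup>2 \<le> K * (\<delta> * R) * B\<^sup>2"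
    by simp
  have "\<bar>\<sigma> (u * ?a) / (u * deriv \<sigma> 0) - ?a\<bar> \<le> K * u * ?a\<^sup>2 / \<bar>deriv \<sigma> 0\<bar>"
    using \<open>u > 0\<close> by (rule \<sigma>_scaled_linearization)
  also have "\<dots> \<le> K * (\<delta> * R) * B\<^sup>2 / \<bar>deriv \<sigma> 0\<bar>"
    using \<open>K * u * ?a\<^sup>2 \<le> K * (\<delta> * R) * B\<^sup>2\<close> by (rule divide_right_mono) simp
  also have "\<dots> = \<delta> * (K * R * B\<^sup>2 / \<bar>deriv \<sigma> 0\<bar>)"
    by (simp add: ac_simps)
  finally show ?thesis .
qed

text \<open>The recurrent weights delta R 1_S make the recurrent input u times the mean depth-n
  activation over S, where u = delta R P(S); dividing by u sigma'(0) undoes the linearized sigma.\<close>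

lemma rescaled_activation_close:
  assumes g0: "g0 \<in> L2_fun P" and "\<delta> > 0"
    and S: "S \<subseteq> near_units w0 g0 \<delta>" "S \<in> sets P" "measure P S > 0"
  shows "\<bar>activation_with n w0 g0 y
            - activation_with (Suc n) 0 (\<lambda>\<theta>. \<delta> * R * indicator S \<theta>) y / (\<delta> * R * measure P S * deriv \<sigma> 0)\<bar>
           \<le> \<delta> * ((K * R * B\<^sup>2 / \<bar>deriv \<sigma> 0\<bar> + K * B) + K * norm (window y (L - n)))"
proof -
  define u where "u = \<delta> * R * measure P S"
  let ?a = "mean_activation n S y" and ?f = "activation_with n w0 g0 y" and ?d = "deriv \<sigma> 0"
  have "u > 0" "u \<le> \<delta> * R"
    using S(3) \<open>\<delta> > 0\<close> R_pos Q.prob_le_1[of S] by (simp_all add: u_def mult_left_le)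
  have "activation_with (Suc n) 0 (\<lambda>\<theta>. \<delta> * R * indicator S \<theta>) y = \<sigma> (u * ?a)"
    using activation_with_indicator[OF S(2,3)] by (simp add: u_def)
  then have "\<bar>?f - activation_with (Suc n) 0 (\<lambda>\<theta>. \<delta> * R * indicator S \<theta>) y / (u * ?d)\<bar>
               = \<bar>(?f - ?a) + (?a - \<sigma> (u * ?a) / (u * ?d))\<bar>"
    by simp
  also have "\<dots> \<le> \<bar>?a - ?f\<bar> + \<bar>\<sigma> (u * ?a) / (u * ?d) - ?a\<bar>"
    by (rule order_trans[OF abs_triangle_ineq]) (simp add: abs_minus_commute)
  also have "\<bar>?a - ?f\<bar> \<le> \<delta> * (K * B + K * norm (window y (L - n)))"
    using S activation_close_near_units g0 by (intro mean_activation_close) blast+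
  also have "\<bar>\<sigma> (u * ?a) / (u * ?d) - ?a\<bar> \<le> \<delta> * (K * R * B\<^sup>2 / \<bar>?d\<bar>)"
    using S(2,3) \<open>u > 0\<close> \<open>u \<le> \<delta> * R\<close> by (rule linearized_mean_activation_close)
  finally show ?thesis
    by (simp add: u_def algebra_simps)
qed

lemma activation_with_approx_next:
  assumes g0: "g0 \<in> L2_fun P" "AE \<theta> in P. \<bar>g0 \<theta>\<bar> \<le> R"
  shows "L2_approx nu0 (bounded_activations (Suc n)) (activation_with n w0 g0)"
proof (rule L2_approx_if_pointwise[OF bounded_activations_L2 activation_with_L2[OF L2_fun_measurable[OF g0(1)]] envelope_L2])
  fix \<delta> :: real assume \<delta>: "0 < \<delta>" "\<delta> \<le> 1"
  define S where "S = near_units w0 g0 \<delta>"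
  define g where "g = (\<lambda>\<theta>. \<delta> * R * indicator S \<theta> :: real)"
  have S: "S \<in> sets P" "measure P S > 0"
    unfolding S_def using near_units_measurable[OF L2_fun_measurable[OF g0(1)]] near_units_positive[OF g0 \<delta>(1)]
    by auto
  have "\<bar>g \<theta>\<bar> \<le> R" for \<theta>
    using \<delta> R_pos by (simp add: g_def indicator_def mult_left_le_one_le)
  then have "g \<in> L2_fun P" "AE \<theta> in P. \<bar>g \<theta>\<bar> \<le> R"
    using S(1) by (auto simp: g_def intro!: Q.L2_fun_bounded[where B = R])
  then have \<phi>: "(\<lambda>y. 1 / (\<delta> * R * measure P S * deriv \<sigma> 0) * activation_with (Suc n) 0 g y)
               \<in> lin_span (bounded_activations (Suc n))"
    unfolding bounded_activations_def by (intro lin_span_scale) blast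
  have "\<bar>activation_with n w0 g0 y - 1 / (\<delta> * R * measure P S * deriv \<sigma> 0) * activation_with (Suc n) 0 g y\<bar>
      \<le> \<delta> * ((K * R * B\<^sup>2 / \<bar>deriv \<sigma> 0\<bar> + K * B) + K * norm (window y (L - n)))" for y
    using rescaled_activation_close[OF g0(1) \<delta>(1) _ S] by (simp add: g_def S_def)
  then show "\<exists>\<phi>\<in>lin_span (bounded_activations (Suc n)). \<forall>y\<in>space nu0.
      \<bar>activation_with n w0 g0 y - \<phi> y\<bar> \<le> \<delta> * ((K * R * B\<^sup>2 / \<bar>deriv \<sigma> 0\<bar> + K * B) + K * norm (window y (L - n)))"
    by (intro bexI[OF _ \<phi>]) simp
qed

lemma bounded_activations_zero: "bounded_activations 0 = {(\<lambda>x. \<sigma> (w \<bullet> x)) | w. True}"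
proof -
  have "activation_with 0 w g = (\<lambda>x. \<sigma> (w \<bullet> x))" for w g
    by (simp add: fun_eq_iff activation_with_def recurrent_input_def window_last)
  moreover have "(\<lambda>_. 0) \<in> L2_fun P" "AE \<theta> in P. \<bar>(\<lambda>_. 0 :: real) \<theta>\<bar> \<le> R"
    using L2_fun_zero R_pos by auto
  ultimately show ?thesis
    unfolding bounded_activations_def by auto
qed

lemma span_dense_bounded_activations: "span_dense_L2 nu0 (bounded_activations n)"
proof (induction n)
  case 0
  show ?case
    using ridge_dense by (simp add: A3b_def bounded_activations_zero)
next
  case (Suc n)
  have "\<forall>\<phi>\<in>bounded_activations n. L2_approx nu0 (bounded_activations (Suc n)) \<phi>"
    using activation_with_approx_next by (auto simp: bounded_activations_def)
  then show ?case
    by (rule span_dense_L2_trans[OF Suc.IH bounded_activations_L2])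
qed

lemma span_dense_activations: "span_dense_L2 nu0 (activations n)"
proof -
  have "\<forall>\<phi>\<in>bounded_activations n. L2_approx nu0 (activations n) \<phi>"
    using activation_with_approx_by_activations by (auto simp: bounded_activations_def)
  then show ?thesis
    by (rule span_dense_L2_trans[OF span_dense_bounded_activations activations_L2])
qed

lemma span_dense_hidden_features:
  "span_dense_L2 (nu_L0 nu0 T L) {(\<lambda>x. \<sigma> (H_hh P Wxh Whh \<sigma> L x 0 \<theta> + Wxh \<theta> \<bullet> x 0)) | \<theta>. \<theta> \<in> space P}"
    (is "span_dense_L2 _ ?F")
proof -
  have "(\<lambda>x. \<sigma> (H_hh P Wxh Whh \<sigma> L x 0 \<theta> + Wxh \<theta> \<bullet> x 0)) \<circ> window = activation L \<theta>" for \<theta>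
    by (simp add: fun_eq_iff H_hh_def activation_def)
  then have "(\<lambda>f. f \<circ> window) ` ?F = activations L"
    by (simp add: activations_def Setcompr_eq_image image_image)
  then have "span_dense_L2 nu0 ((\<lambda>f. f \<circ> window) ` ?F)"
    using span_dense_activations by simp
  moreover have "?F \<subseteq> borel_measurable (PiM {0..L} (\<lambda>_. borel))"
  proof safe
    fix \<theta> assume [measurable]: "\<theta> \<in> space P"
    show "(\<lambda>x. \<sigma> (H_hh P Wxh Whh \<sigma> L x 0 \<theta> + Wxh \<theta> \<bullet> x 0)) \<in> borel_measurable (PiM {0..L} (\<lambda>_. borel))"
      unfolding H_hh_def by measurable
  qed
  moreover have "nu_L0 nu0 T L = distr nu0 (PiM {0..L} (\<lambda>_. borel)) window"
    by (simp add: nu_L0_def window_def[abs_def])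
  ultimately show ?thesis
    using span_dense_L2_distr[OF window_measurable] by simp
qed

end

text \<open>The locale predicate omits the parameter \<open>L\<close>, which occurs in no locale assumption.\<close>

lemma mean_field_rnn_exists:
  fixes nu0 :: "'a::euclidean_space measure" and T :: "'a \<Rightarrow> 'a" and R :: real
    and P :: "'b measure" and Wxh :: "'b \<Rightarrow> 'a" and Whh :: "'b \<Rightarrow> 'b \<Rightarrow> real"
    and \<sigma> :: "real \<Rightarrow> real"
  assumes "R > 0" "continuous_on UNIV T"
    and "prob_space nu0" "sets nu0 = sets borel" "uniquely_ergodic T nu0"
    and "integrable nu0 (\<lambda>x. norm x ^ 4)" "A3a R \<sigma>" "A3b \<sigma> nu0"
    and "prob_space P" "Wxh \<in> borel_measurable P"
    and "(\<lambda>(\<theta>, \<theta>'). Whh \<theta> \<theta>') \<in> borel_measurable (P \<Otimes>\<^sub>M P)"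
    and "\<And>\<theta>. \<theta> \<in> space P \<Longrightarrow> Whh \<theta> \<in> L2_fun P" "full_support R P Wxh Whh"
  shows "\<exists>K B. mean_field_rnn nu0 P R K B T Wxh Whh \<sigma>"
proof -
  interpret nu0: prob_space nu0
    by fact
  obtain K where "bounded (range \<sigma>)" and \<sigma>_differentiable: "\<forall>z. \<sigma> differentiable (at z)"
    and "\<sigma> 0 = 0" "deriv \<sigma> 0 \<noteq> 0" "\<forall>z. \<bar>deriv \<sigma> z\<bar> \<le> K"
    and "\<forall>y z. \<bar>deriv \<sigma> y - deriv \<sigma> z\<bar> \<le> K * \<bar>y - z\<bar>"
    using \<open>A3a R \<sigma>\<close> unfolding A3a_def by blast
  moreover obtain B where "\<And>z. \<bar>\<sigma> z\<bar> \<le> B"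
    using \<open>bounded (range \<sigma>)\<close> unfolding bounded_iff by auto
  moreover have "(\<lambda>x. norm x) \<in> borel_measurable nu0"
    by (subst measurable_cong_sets[OF \<open>sets nu0 = sets borel\<close> refl]) measurable
  then have "integrable nu0 (\<lambda>x. (norm x)\<^sup>2)"
    using \<open>integrable nu0 (\<lambda>x. norm x ^ 4)\<close> by (rule nu0.integrable_power2_if_power4)
  moreover have "T \<in> borel_measurable borel"
    using \<open>continuous_on UNIV T\<close> by (rule borel_measurable_continuous_onI)
  moreover have "distr nu0 borel T = nu0"
    using \<open>uniquely_ergodic T nu0\<close> unfolding uniquely_ergodic_def by blast
  moreover have "(\<sigma> has_real_derivative deriv \<sigma> z) (at z)" for z
    using \<sigma>_differentiable by (simp add: DERIV_deriv_iff_real_differentiable)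
  ultimately have "mean_field_rnn nu0 P R K B T Wxh Whh \<sigma>"
    using assms by (intro mean_field_rnn.intro mean_field_rnn_axioms.intro) simp_all
  then show ?thesis
    by blast
qed

theorem mainTheorem6:
  fixes L :: nat and t R :: real
    and T :: "'a::euclidean_space \<Rightarrow> 'a" and nu0 :: "'a measure"
    and P :: "'b measure" and Wxh :: "'b \<Rightarrow> 'a" and Whh :: "'b \<Rightarrow> 'b \<Rightarrow> real"
    and \<sigma> :: "real \<Rightarrow> real"
  assumes "L > 0" and "t \<ge> 0" and "R > 0"
    and "continuous_on UNIV T"
    and "prob_space nu0" and "sets nu0 = sets borel"
    and "uniquely_ergodic T nu0"
    and "integrable nu0 (\<lambda>x. norm x ^ 4)"
    and "A3a R \<sigma>" and "A3b \<sigma> nu0"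
    and "prob_space P"
    and "Wxh \<in> borel_measurable P"
    and "(\<lambda>(\<theta>, \<theta>'). Whh \<theta> \<theta>') \<in> borel_measurable (P \<Otimes>\<^sub>M P)"
    and "\<forall>\<theta> \<in> space P. (\<lambda>\<theta>'. Whh \<theta>' \<theta>) \<in> L2_fun P \<and> Whh \<theta> \<in> L2_fun P"
    and "full_support R P Wxh Whh"
  shows "span_dense_L2 (nu_L0 nu0 T L)
           {(\<lambda>x. \<sigma> (H_hh P Wxh Whh \<sigma> L x 0 \<theta> + Wxh \<theta> \<bullet> x 0)) | \<theta>. \<theta> \<in> space P}"
proof -
  have "\<And>\<theta>. \<theta> \<in> space P \<Longrightarrow> Whh \<theta> \<in> L2_fun P"
    using assms(14) by blast
  then obtain K B where "mean_field_rnn nu0 P R K B T Wxh Whh \<sigma>"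
    using mean_field_rnn_exists[OF assms(3-13) _ assms(15)] by blast
  then show ?thesis
    by (rule mean_field_rnn.span_dense_hidden_features)
qed

end
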